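(* Let $X$ be a finite nonempty set, $Y$ a nonempty compact metric space, and $u:X\times Y\to\mathbb{R}$ such that $y\mapsto u(x,y)$ is continuous for each $x\in X$. Run the Combinatorial-Continuous Double Oracle (CCDO) procedure with tolerance $\epsilon\ge 0$. Then: (1) If $\epsilon = 0$ and the procedure runs for infinitely many iterations, then for every subsequence of the subgame equilibria $\{(p_k^*,q_k^* )\}$ that converges weakly to some $(p^*,q^* )\in\Delta_X\times\Delta_Y$ (i.e. $p_k^*\Rightarrow p^*$, $q_k^*\Rightarrow q^*$ along the subsequence), the limit $(p^*,q^* )$ is a mixed Nash equilibrium of the whole game. (2) If $\epsilon>0$, the procedure terminates after finitely many iterations and its output $(p_k^*,q_k^* )$ is an $\epsilon$-equilibrium of the whole game.
   Context: Game: Player 1 picks $x\in X$, Player 2 picks $y\in Y$; Player 1 receives $u(x,y)$, Player 2 receives $-u(x,y)$. $\Delta_X$ is the set of probability vectors on $X$, $\Delta_Y$ the set of Borel probability measures on $Y$, and $U(p,q)=\sum_{x} p(x)\int_Y u(x,y)\,dq(y)$; pure strategies are identified with point masses. $(p^*,q^* )$ is a mixed Nash equilibrium if $U(p,q^* )\le U(p^*,q^* )\le U(p^*,q)$ for all $p\in\Delta_X,q\in\Delta_Y$, and an $\epsilon$-equilibrium if $U(p,q^* )-\epsilon\le U(p^*,q^* )\le U(p^*,q)+\epsilon$ for all such $p,q$. Weak convergence $q_k\Rightarrow q$ means $\int f\,dq_k\to\int f\,dq$ for all bounded continuous $f$ on $Y$; on $X$ it is coordinatewise convergence. Best response sets: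 $\mathbb{BR}_1(q)=\arg\max_{x\in X}U(x,q)$, $\mathbb{BR}_2(p)=\arg\min_{y\in Y}U(p,y)$. CCDO procedure: start from nonempty finite sets $X_1\subseteq X$, $Y_1\subseteq Y$. At iteration $k$: compute a mixed Nash equilibrium $(p_k^*,q_k^* )$ of the finite subgame $\langle X_k, Y_k, u\rangle$ (viewed as mixed strategies of the whole game supported on $X_k$, $Y_k$); choose $x_{k+1}\in\mathbb{BR}_1(q_k^* )$ and $y_{k+1}\in\mathbb{BR}_2(p_k^* )$; set $X_{k+1}=X_k\cup\{x_{k+1}\}$, $Y_{k+1}=Y_k\cup\{y_{k+1}\}$; stop and output $(p_k^*,q_k^* )$ if $U(x_{k+1},q_k^* )-U(p_k^*,y_{k+1})\le\epsilon$, otherwise continue. *)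

theory Defs
  imports "HOL-Probability.Probability"
begin

definition mixed1 :: "'a set \<Rightarrow> ('a \<Rightarrow> real) set" where
  "mixed1 X = {p. (\<forall>x\<in>X. 0 \<le> p x) \<and> (\<forall>x. x \<notin> X \<longrightarrow> p x = 0) \<and> sum p X = 1}"

definition mixed2 :: "'b::metric_space set \<Rightarrow> 'b measure set" where
  "mixed2 Y = {q. prob_space q \<and> sets q = sets (restrict_space borel Y)}"

definition payoff :: "'a set \<Rightarrow> ('a \<Rightarrow> 'b \<Rightarrow> real) \<Rightarrow> ('a \<Rightarrow> real) \<Rightarrow> 'b measure \<Rightarrow> real" where
  "payoff X u p q = (\<Sum>x\<in>X. p x * (\<integral>y. u x y \<partial>q))"

definition pure1 :: "'a \<Rightarrow> ('a \<Rightarrow> real)" where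
  "pure1 x = (\<lambda>x'. if x' = x then 1 else 0)"

definition pure2 :: "'b::metric_space set \<Rightarrow> 'b \<Rightarrow> 'b measure" where
  "pure2 Y y = return (restrict_space borel Y) y"

definition mixed_NE :: "'a set \<Rightarrow> 'b::metric_space set \<Rightarrow> ('a \<Rightarrow> 'b \<Rightarrow> real) \<Rightarrow> ('a \<Rightarrow> real) \<Rightarrow> 'b measure \<Rightarrow> bool" where
  "mixed_NE X Y u p q \<longleftrightarrow> p \<in> mixed1 X \<and> q \<in> mixed2 Y \<and>
     (\<forall>p'\<in>mixed1 X. \<forall>q'\<in>mixed2 Y. payoff X u p' q \<le> payoff X u p q \<and> payoff X u p q \<le> payoff X u p q')"

definition eps_NE :: "'a set \<Rightarrow> 'b::metric_space set \<Rightarrow> ('a \<Rightarrow> 'b \<Rightarrow> real) \<Rightarrow> real \<Rightarrow> ('a \<Rightarrow> real) \<Rightarrow> 'b measure \<Rightarrow> bool" where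
  "eps_NE X Y u \<epsilon> p q \<longleftrightarrow> p \<in> mixed1 X \<and> q \<in> mixed2 Y \<and>
     (\<forall>p'\<in>mixed1 X. \<forall>q'\<in>mixed2 Y. payoff X u p' q - \<epsilon> \<le> payoff X u p q \<and> payoff X u p q \<le> payoff X u p q' + \<epsilon>)"

text \<open>Equilibrium of the finite subgame on Xk, Yk, viewed as mixed strategies of the whole
 game supported on Xk and Yk.\<close>
definition subgame_NE :: "'a set \<Rightarrow> 'b::metric_space set \<Rightarrow> ('a \<Rightarrow> 'b \<Rightarrow> real) \<Rightarrow> 'a set \<Rightarrow> 'b set \<Rightarrow> ('a \<Rightarrow> real) \<Rightarrow> 'b measure \<Rightarrow> bool" where
  "subgame_NE X Y u Xk Yk p q \<longleftrightarrow>
     p \<in> mixed1 X \<and> (\<forall>x. x \<notin> Xk \<longrightarrow> p x = 0) \<and>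
     q \<in> mixed2 Y \<and> emeasure q Yk = 1 \<and>
     (\<forall>p'\<in>mixed1 X. \<forall>q'\<in>mixed2 Y. (\<forall>x. x \<notin> Xk \<longrightarrow> p' x = 0) \<longrightarrow> emeasure q' Yk = 1 \<longrightarrow>
        payoff X u p' q \<le> payoff X u p q \<and> payoff X u p q \<le> payoff X u p q')"

definition BR1 :: "'a set \<Rightarrow> ('a \<Rightarrow> 'b \<Rightarrow> real) \<Rightarrow> 'b measure \<Rightarrow> 'a set" where
  "BR1 X u q = {x\<in>X. \<forall>x'\<in>X. payoff X u (pure1 x') q \<le> payoff X u (pure1 x) q}"

definition BR2 :: "'a set \<Rightarrow> 'b::metric_space set \<Rightarrow> ('a \<Rightarrow> 'b \<Rightarrow> real) \<Rightarrow> ('a \<Rightarrow> real) \<Rightarrow> 'b set" where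
  "BR2 X Y u p = {y\<in>Y. \<forall>y'\<in>Y. payoff X u p (pure2 Y y) \<le> payoff X u p (pure2 Y y')}"

definition weak_conv :: "'b::metric_space set \<Rightarrow> (nat \<Rightarrow> 'b measure) \<Rightarrow> 'b measure \<Rightarrow> bool" where
  "weak_conv Y qs q \<longleftrightarrow> (\<forall>f :: 'b \<Rightarrow> real. continuous_on Y f \<and> bounded (f ` Y) \<longrightarrow>
     (\<lambda>k. \<integral>y. f y \<partial>(qs k)) \<longlonglongrightarrow> (\<integral>y. f y \<partial>q))"

definition ccdo_init :: "'a set \<Rightarrow> 'b set \<Rightarrow> (nat \<Rightarrow> 'a set) \<Rightarrow> (nat \<Rightarrow> 'b set) \<Rightarrow> bool" where
  "ccdo_init X Y Xs Ys \<longleftrightarrow> finite (Xs 0) \<and> Xs 0 \<noteq> {} \<and> Xs 0 \<subseteq> X \<and>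
      finite (Ys 0) \<and> Ys 0 \<noteq> {} \<and> Ys 0 \<subseteq> Y"

definition ccdo_step :: "'a set \<Rightarrow> 'b::metric_space set \<Rightarrow> ('a \<Rightarrow> 'b \<Rightarrow> real) \<Rightarrow>
    (nat \<Rightarrow> 'a set) \<Rightarrow> (nat \<Rightarrow> 'b set) \<Rightarrow> (nat \<Rightarrow> 'a \<Rightarrow> real) \<Rightarrow> (nat \<Rightarrow> 'b measure) \<Rightarrow>
    (nat \<Rightarrow> 'a) \<Rightarrow> (nat \<Rightarrow> 'b) \<Rightarrow> nat \<Rightarrow> bool" where
  "ccdo_step X Y u Xs Ys P Q xs ys k \<longleftrightarrow>
     subgame_NE X Y u (Xs k) (Ys k) (P k) (Q k) \<and>
     xs (Suc k) \<in> BR1 X u (Q k) \<and> ys (Suc k) \<in> BR2 X Y u (P k) \<and>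
     Xs (Suc k) = Xs k \<union> {xs (Suc k)} \<and> Ys (Suc k) = Ys k \<union> {ys (Suc k)}"

definition ccdo_stop :: "'a set \<Rightarrow> 'b::metric_space set \<Rightarrow> ('a \<Rightarrow> 'b \<Rightarrow> real) \<Rightarrow> real \<Rightarrow>
    (nat \<Rightarrow> 'a \<Rightarrow> real) \<Rightarrow> (nat \<Rightarrow> 'b measure) \<Rightarrow> (nat \<Rightarrow> 'a) \<Rightarrow> (nat \<Rightarrow> 'b) \<Rightarrow> nat \<Rightarrow> bool" where
  "ccdo_stop X Y u \<epsilon> P Q xs ys k \<longleftrightarrow>
     payoff X u (pure1 (xs (Suc k))) (Q k) - payoff X u (P k) (pure2 Y (ys (Suc k))) \<le> \<epsilon>"

end

theory Submission
  imports Defs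
begin

(* Let v_k = U(p_k, q_k). Since y_(i+1) lies in Y_k for every k > i, v_k <= U(p_k, y_(i+1));
   and as X is finite, the sets X_k eventually stop growing, after which U(x, q_k) <= v_k for
   every x in X.
   For epsilon = 0 both inequalities survive the limit along the subsequence (U is continuous for
   pointwise convergence of p and weak convergence of q, and U(p_k, .) -> U(p, .) uniformly on Y);
   combined with y_(k+1) being a best response to p_k they give the equilibrium conditions.
   For epsilon > 0, a run that never stops eventually has U(p_k, y_(k+1)) < v_k - epsilon. Along
   a subsequence on which p_k converges, U(p_j, .) is uniformly close to U(p_i, .) for consecutive
   indices i < j, so v_j <= U(p_j, y_(i+1)) forces the values to drop by epsilon/2 at each step,
   contradicting their boundedness. *)

lemma convergent_subseq_finite_family:
  fixes P :: "nat \<Rightarrow> 'a \<Rightarrow> 'b::metric_space"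
  assumes "finite S" and "compact K" and "\<And>k x. x \<in> S \<Longrightarrow> P k x \<in> K"
  shows "\<exists>r l. strict_mono r \<and> (\<forall>x\<in>S. (\<lambda>k. P (r k) x) \<longlonglongrightarrow> l x)"
  using assms(1,3)
proof (induction S rule: finite_induct)
  case empty
  show ?case using strict_mono_id by blast
next
  case (insert a S)
  then obtain r l where r: "strict_mono r" and l: "\<forall>x\<in>S. (\<lambda>k. P (r k) x) \<longlonglongrightarrow> l x"
    by auto
  have "\<forall>k. P (r k) a \<in> K" using insert.prems by simp
  with compact_imp_seq_compact[OF assms(2)] obtain la r'
    where r': "strict_mono r'" and la: "((\<lambda>k. P (r k) a) \<circ> r') \<longlonglongrightarrow> la"
    by (rule seq_compactE)
  have "(\<lambda>k. P ((r \<circ> r') k) x) \<longlonglongrightarrow> (l(a := la)) x" if "x \<in> insert a S" for x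
  proof (cases "x = a")
    case True
    then show ?thesis using la by (simp add: comp_def)
  next
    case False
    then have "((\<lambda>k. P (r k) x) \<circ> r') \<longlonglongrightarrow> l x"
      using l that r' by (auto intro: LIMSEQ_subseq_LIMSEQ)
    then show ?thesis using False by (simp add: comp_def)
  qed
  then show ?case using strict_mono_o[OF r r'] by blast
qed

lemma tendsto_uniform_limit_const:
  assumes "(f \<longlongrightarrow> l) F"
  shows "uniform_limit S (\<lambda>n _. f n) (\<lambda>_. l) F"
  by (rule uniform_limitI) (use tendstoD[OF assms] in \<open>auto elim: eventually_mono\<close>)

lemma uniform_limit_sum:
  fixes f :: "'i \<Rightarrow> 'a \<Rightarrow> 'b \<Rightarrow> 'c::real_normed_vector"
  assumes "finite I" and "\<And>i. i \<in> I \<Longrightarrow> uniform_limit S (f i) (l i) F"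
  shows "uniform_limit S (\<lambda>n y. \<Sum>i\<in>I. f i n y) (\<lambda>y. \<Sum>i\<in>I. l i y) F"
  using assms
proof (induction I rule: finite_induct)
  case empty
  show ?case by (simp add: uniform_limit_const)
next
  case (insert i I)
  then show ?case by (simp add: uniform_limit_add)
qed

lemma eventually_stable_chain:
  assumes "finite S" and "incseq A" and "\<And>k. A k \<subseteq> S"
  shows "\<exists>K. \<forall>k\<ge>K. A k = A K"
proof -
  have "finite (card ` range A)"
    by (rule finite_subset[of _ "{..card S}"]) (use assms in \<open>auto intro: card_mono\<close>)
  then obtain K where K: "card (A K) = Max (card ` range A)"
    using Max_in by fastforce
  have "A k = A K" if "K \<le> k" for k
  proof (rule card_subset_eq[symmetric])
    show "finite (A k)" using assms finite_subset by blast
    show "A K \<subseteq> A k" using \<open>incseq A\<close> that by (simp add: incseq_def)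
    show "card (A K) = card (A k)"
      using K \<open>finite (card ` range A)\<close> card_mono[OF \<open>finite (A k)\<close> \<open>A K \<subseteq> A k\<close>]
      by (metis Max_ge le_antisym rangeI image_eqI)
  qed
  then show ?thesis by blast
qed

lemma exists_less_if_steps_down:
  fixes f :: "nat \<Rightarrow> real"
  assumes "c > 0" and "\<And>n. f (Suc n) \<le> f n - c"
  shows "\<exists>n. f n < L"
proof -
  have f_le: "f n \<le> f 0 - real n * c" for n
  proof (induction n)
    case (Suc n)
    then show ?case using assms(2)[of n] by (simp add: algebra_simps)
  qed simp
  obtain n :: nat where "(f 0 - L) / c < real n" using reals_Archimedean2 by blast
  then have "f 0 - real n * c < L" using \<open>c > 0\<close> by (simp add: field_simps)
  then show ?thesis using f_le by (meson le_less_trans)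
qed

lemma sum_mixed1_le:
  assumes "p \<in> mixed1 X" and "\<And>x. x \<in> X \<Longrightarrow> f x \<le> c"
  shows "(\<Sum>x\<in>X. p x * f x) \<le> c"
proof -
  have "(\<Sum>x\<in>X. p x * f x) \<le> (\<Sum>x\<in>X. p x * c)"
    using assms by (intro sum_mono mult_left_mono) (auto simp: mixed1_def)
  also have "\<dots> = c" using assms(1) by (simp add: mixed1_def flip: sum_distrib_right)
  finally show ?thesis .
qed

lemma sum_mixed1_ge:
  assumes "p \<in> mixed1 X" and "\<And>x. x \<in> X \<Longrightarrow> c \<le> f x"
  shows "c \<le> (\<Sum>x\<in>X. p x * f x)"
proof -
  have "c = (\<Sum>x\<in>X. p x * c)" using assms(1) by (simp add: mixed1_def flip: sum_distrib_right)
  also have "\<dots> \<le> (\<Sum>x\<in>X. p x * f x)"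
    using assms by (intro sum_mono mult_left_mono) (auto simp: mixed1_def)
  finally show ?thesis .
qed

lemma mixed_NE_iff_eps_NE_0: "mixed_NE X Y u p q \<longleftrightarrow> eps_NE X Y u 0 p q"
  by (simp add: mixed_NE_def eps_NE_def)

definition payoff_at :: "'a set \<Rightarrow> ('a \<Rightarrow> 'b \<Rightarrow> real) \<Rightarrow> ('a \<Rightarrow> real) \<Rightarrow> 'b \<Rightarrow> real" where
  "payoff_at X u p y = (\<Sum>x\<in>X. p x * u x y)"

locale finite_continuous_game =
  fixes X :: "'a set" and Y :: "'b::metric_space set" and u :: "'a \<Rightarrow> 'b \<Rightarrow> real"
  assumes finite_X: "finite X" and compact_Y: "compact Y"
    and continuous_u: "\<And>x. x \<in> X \<Longrightarrow> continuous_on Y (u x)"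
begin

lemma mixed2D:
  assumes "q \<in> mixed2 Y"
  shows "prob_space q" and "sets q = sets (restrict_space borel Y)" and "space q = Y"
proof -
  show "prob_space q" and "sets q = sets (restrict_space borel Y)"
    using assms by (simp_all add: mixed2_def)
  then show "space q = Y" by (simp add: sets_eq_imp_space_eq space_restrict_space)
qed

lemma u_bounded: "\<exists>B. \<forall>x\<in>X. \<forall>y\<in>Y. \<bar>u x y\<bar> \<le> B"
proof -
  have "bounded (\<Union>x\<in>X. u x ` Y)"
    using finite_X continuous_u compact_Y
    by (intro bounded_UN) (auto intro!: compact_imp_bounded compact_continuous_image)
  then show ?thesis by (force simp: bounded_iff)
qed

lemma integrable_u:
  assumes "x \<in> X" and "q \<in> mixed2 Y"
  shows "integrable q (u x)"
proof -
  interpret prob_space q using mixed2D assms by auto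
  obtain B where B: "\<forall>x\<in>X. \<forall>y\<in>Y. \<bar>u x y\<bar> \<le> B" using u_bounded by blast
  have "u x \<in> borel_measurable (restrict_space borel Y)"
    using continuous_u assms(1) by (intro borel_measurable_continuous_on_restrict)
  then have "u x \<in> borel_measurable q"
    using measurable_cong_sets[OF mixed2D(2)[OF assms(2)] refl] by blast
  show ?thesis
    by (rule integrable_const_bound[of _ B]) (use B assms mixed2D \<open>u x \<in> borel_measurable q\<close> in auto)
qed

lemma payoff_eq_integral:
  assumes "q \<in> mixed2 Y"
  shows "payoff X u p q = (\<integral>y. payoff_at X u p y \<partial>q)"
  unfolding payoff_def payoff_at_def
  by (subst Bochner_Integration.integral_sum) (auto intro!: integrable_mult_right integrable_u assms)

lemma payoff_ge_if_payoff_at_ge: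
  assumes "q \<in> mixed2 Y" and "\<And>y. y \<in> Y \<Longrightarrow> c \<le> payoff_at X u p y"
  shows "c \<le> payoff X u p q"
proof -
  interpret prob_space q using mixed2D assms by auto
  have "integrable q (payoff_at X u p)"
    unfolding payoff_at_def using assms by (auto intro!: integrable_u)
  then show ?thesis
    unfolding payoff_eq_integral[OF assms(1)] by (rule integral_ge_const) (use assms mixed2D in auto)
qed

lemma pure1_in_mixed1: "x \<in> X \<Longrightarrow> pure1 x \<in> mixed1 X"
  unfolding mixed1_def pure1_def using finite_X by auto

lemma payoff_pure1:
  assumes "x \<in> X"
  shows "payoff X u (pure1 x) q = (\<integral>y. u x y \<partial>q)"
proof -
  have "payoff X u (pure1 x) q = (\<Sum>x'\<in>X. if x' = x then (\<integral>y. u x' y \<partial>q) else 0)"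
    unfolding payoff_def by (rule sum.cong) (auto simp: pure1_def)
  then show ?thesis using assms finite_X by simp
qed

lemma payoff_le_if_pure1_le:
  assumes "p \<in> mixed1 X" and "\<And>x. x \<in> X \<Longrightarrow> payoff X u (pure1 x) q \<le> c"
  shows "payoff X u p q \<le> c"
proof -
  have "payoff X u p q = (\<Sum>x\<in>X. p x * payoff X u (pure1 x) q)"
    unfolding payoff_def[of X u p q] by (intro sum.cong refl) (simp add: payoff_pure1)
  also have "\<dots> \<le> c" using assms by (rule sum_mixed1_le)
  finally show ?thesis .
qed

lemma pure2_in_mixed2: "y \<in> Y \<Longrightarrow> pure2 Y y \<in> mixed2 Y"
  unfolding pure2_def mixed2_def by (auto intro!: prob_space_return simp: space_restrict_space)

lemma emeasure_pure2:
  assumes "A \<subseteq> Y" and "finite A" and "y \<in> A"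
  shows "emeasure (pure2 Y y) A = 1"
proof -
  have "A \<in> sets (restrict_space borel Y)"
    using assms(1,2) finite_imp_closed
    by (auto simp: sets_restrict_space intro!: image_eqI[where x=A] borel_closed)
  then show ?thesis unfolding pure2_def using assms(3) by simp
qed

lemma payoff_pure2:
  assumes "y \<in> Y"
  shows "payoff X u p (pure2 Y y) = payoff_at X u p y"
  unfolding payoff_def payoff_at_def pure2_def
  by (intro sum.cong refl arg_cong2[where f="(*)"] integral_return)
     (use assms continuous_u in \<open>auto simp: space_restrict_space intro!: borel_measurable_continuous_on_restrict\<close>)

lemma payoff_lower_bound: "\<exists>B. \<forall>p\<in>mixed1 X. \<forall>q\<in>mixed2 Y. B \<le> payoff X u p q"
proof -
  obtain B where B: "\<forall>x\<in>X. \<forall>y\<in>Y. \<bar>u x y\<bar> \<le> B" using u_bounded by blast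
  have "- B \<le> payoff X u p q" if "p \<in> mixed1 X" "q \<in> mixed2 Y" for p q
    using that(2)
  proof (rule payoff_ge_if_payoff_at_ge)
    show "- B \<le> payoff_at X u p y" if "y \<in> Y" for y
      unfolding payoff_at_def using B that by (intro sum_mixed1_ge[OF \<open>p \<in> mixed1 X\<close>]) force
  qed
  then show ?thesis by blast
qed

lemma eps_NE_if_pure_bounds:
  assumes p: "p \<in> mixed1 X" and q: "q \<in> mixed2 Y"
    and a: "\<And>x. x \<in> X \<Longrightarrow> payoff X u (pure1 x) q \<le> a"
    and b: "\<And>y. y \<in> Y \<Longrightarrow> b \<le> payoff_at X u p y"
    and "a - b \<le> \<epsilon>"
  shows "eps_NE X Y u \<epsilon> p q"
  unfolding eps_NE_def
proof (intro conjI p q ballI)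
  fix p' q' assume p': "p' \<in> mixed1 X" and q': "q' \<in> mixed2 Y"
  have "payoff X u p' q \<le> a" "payoff X u p q \<le> a"
    using p' p a by (auto intro: payoff_le_if_pure1_le)
  moreover have "b \<le> payoff X u p q'" "b \<le> payoff X u p q"
    using q' q b by (auto intro: payoff_ge_if_payoff_at_ge)
  ultimately show "payoff X u p' q - \<epsilon> \<le> payoff X u p q"
    and "payoff X u p q \<le> payoff X u p q' + \<epsilon>"
    using \<open>a - b \<le> \<epsilon>\<close> by linarith+
qed

lemma payoff_tendsto:
  assumes "\<And>x. x \<in> X \<Longrightarrow> (\<lambda>k. p k x) \<longlonglongrightarrow> p' x" and "weak_conv Y qs q"
  shows "(\<lambda>k. payoff X u (p k) (qs k)) \<longlonglongrightarrow> payoff X u p' q"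
proof -
  have "(\<lambda>k. \<integral>y. u x y \<partial>qs k) \<longlonglongrightarrow> (\<integral>y. u x y \<partial>q)" if "x \<in> X" for x
    using assms(2) continuous_u[OF that] compact_Y unfolding weak_conv_def
    by (auto intro!: compact_imp_bounded compact_continuous_image)
  then show ?thesis unfolding payoff_def using assms(1) by (auto intro!: tendsto_intros)
qed

lemma uniform_limit_payoff_at:
  assumes "\<And>x. x \<in> X \<Longrightarrow> (\<lambda>k. p k x) \<longlonglongrightarrow> p' x"
  shows "uniform_limit Y (\<lambda>k. payoff_at X u (p k)) (payoff_at X u p') sequentially"
  unfolding payoff_at_def
proof (intro uniform_limit_sum finite_X uniform_lim_mult)
  fix x assume "x \<in> X"
  show "uniform_limit Y (\<lambda>k _. p k x) (\<lambda>_. p' x) sequentially"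
    using assms[OF \<open>x \<in> X\<close>] by (rule tendsto_uniform_limit_const)
  show "bounded (u x ` Y)"
    using \<open>x \<in> X\<close> compact_Y continuous_u by (auto intro: compact_imp_bounded compact_continuous_image)
qed (auto simp: image_constant_conv intro: uniform_limit_const)

end

locale ccdo_run = finite_continuous_game X Y u
  for X :: "'a set" and Y :: "'b::metric_space set" and u :: "'a \<Rightarrow> 'b \<Rightarrow> real" +
  fixes Xs :: "nat \<Rightarrow> 'a set" and Ys :: "nat \<Rightarrow> 'b set" and P :: "nat \<Rightarrow> 'a \<Rightarrow> real"
    and Q :: "nat \<Rightarrow> 'b measure" and xs :: "nat \<Rightarrow> 'a" and ys :: "nat \<Rightarrow> 'b"
  assumes init: "ccdo_init X Y Xs Ys"
    and step: "\<And>k. ccdo_step X Y u Xs Ys P Q xs ys k"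
begin

lemma stepD:
  "subgame_NE X Y u (Xs k) (Ys k) (P k) (Q k)"
  "xs (Suc k) \<in> BR1 X u (Q k)" "ys (Suc k) \<in> BR2 X Y u (P k)"
  "Xs (Suc k) = insert (xs (Suc k)) (Xs k)" "Ys (Suc k) = insert (ys (Suc k)) (Ys k)"
  using step[of k] unfolding ccdo_step_def by auto

lemma P_in_mixed1: "P k \<in> mixed1 X" and Q_in_mixed2: "Q k \<in> mixed2 Y"
  using stepD(1)[of k] unfolding subgame_NE_def by auto

lemma xs_in_X: "xs (Suc k) \<in> X" and ys_in_Y: "ys (Suc k) \<in> Y"
  using stepD(2,3)[of k] by (auto simp: BR1_def BR2_def)

lemma Xs_subset: "Xs k \<subseteq> X"
  using init by (induction k) (auto simp: ccdo_init_def stepD(4) xs_in_X)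

lemma Ys_subset: "Ys k \<subseteq> Y" and finite_Ys: "finite (Ys k)"
  using init by (induction k) (auto simp: ccdo_init_def stepD(5) ys_in_Y)

lemma incseq_Xs: "incseq Xs" and incseq_Ys: "incseq Ys"
  by (auto intro!: incseq_SucI simp: stepD(4,5))

lemma ys_in_Ys: "i < k \<Longrightarrow> ys (Suc i) \<in> Ys k"
  using incseqD[OF incseq_Ys, of "Suc i" k] stepD(5)[of i] by auto

lemma eventually_xs_in_Xs: "\<exists>K. \<forall>k\<ge>K. xs (Suc k) \<in> Xs k"
proof -
  obtain K where "\<forall>k\<ge>K. Xs k = Xs K"
    using eventually_stable_chain[OF finite_X incseq_Xs Xs_subset] by blast
  then have "xs (Suc k) \<in> Xs k" if "K \<le> k" for k
    using that stepD(4)[of k] by (metis insertI1 le_SucI)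
  then show ?thesis by blast
qed

lemma pure1_payoff_le_value:
  assumes "xs (Suc k) \<in> Xs k" and "x \<in> X"
  shows "payoff X u (pure1 x) (Q k) \<le> payoff X u (P k) (Q k)"
proof -
  have "payoff X u (pure1 x) (Q k) \<le> payoff X u (pure1 (xs (Suc k))) (Q k)"
    using stepD(2)[of k] assms(2) by (auto simp: BR1_def)
  also have "\<dots> \<le> payoff X u (P k) (Q k)"
  proof -
    have "\<forall>x. x \<notin> Xs k \<longrightarrow> pure1 (xs (Suc k)) x = 0"
      using assms(1) by (auto simp: pure1_def)
    then show ?thesis
      using stepD(1)[of k] pure1_in_mixed1[OF xs_in_X] unfolding subgame_NE_def by blast
  qed
  finally show ?thesis .
qed

lemma value_le_payoff_at:
  assumes "y \<in> Ys k"
  shows "payoff X u (P k) (Q k) \<le> payoff_at X u (P k) y"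
proof -
  have y: "y \<in> Y" using assms Ys_subset by blast
  have "payoff X u (P k) (Q k) \<le> payoff X u (P k) (pure2 Y y)"
    using stepD(1)[of k] P_in_mixed1 pure2_in_mixed2[OF y]
      emeasure_pure2[OF Ys_subset finite_Ys assms]
    unfolding subgame_NE_def by auto
  then show ?thesis using payoff_pure2[OF y] by simp
qed

lemma payoff_at_ys_le:
  assumes "y \<in> Y"
  shows "payoff_at X u (P k) (ys (Suc k)) \<le> payoff_at X u (P k) y"
  using stepD(3)[of k] assms by (auto simp: BR2_def payoff_pure2)

context
  fixes r p q
  assumes r: "strict_mono r" and p: "p \<in> mixed1 X" and q: "q \<in> mixed2 Y"
    and P_lim: "\<And>x. x \<in> X \<Longrightarrow> (\<lambda>k. P (r k) x) \<longlonglongrightarrow> p x"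
    and Q_lim: "weak_conv Y (\<lambda>k. Q (r k)) q"
begin

lemma limit_pure1_payoff_le:
  assumes "x \<in> X"
  shows "payoff X u (pure1 x) q \<le> payoff X u p q"
proof (rule LIMSEQ_le)
  show "(\<lambda>k. payoff X u (pure1 x) (Q (r k))) \<longlonglongrightarrow> payoff X u (pure1 x) q"
    using Q_lim by (rule payoff_tendsto[rotated]) simp
  show "(\<lambda>k. payoff X u (P (r k)) (Q (r k))) \<longlonglongrightarrow> payoff X u p q"
    using P_lim Q_lim by (rule payoff_tendsto)
  obtain K where "\<forall>k\<ge>K. xs (Suc k) \<in> Xs k" using eventually_xs_in_Xs by blast
  then show "\<exists>N. \<forall>k\<ge>N. payoff X u (pure1 x) (Q (r k)) \<le> payoff X u (P (r k)) (Q (r k))"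
    using seq_suble[OF r] assms by (meson order_trans pure1_payoff_le_value)
qed

lemma limit_value_le_payoff_at_ys: "payoff X u p q \<le> payoff_at X u p (ys (Suc (r k)))"
proof (rule LIMSEQ_le)
  show "(\<lambda>n. payoff X u (P (r n)) (Q (r n))) \<longlonglongrightarrow> payoff X u p q"
    using P_lim Q_lim by (rule payoff_tendsto)
  show "(\<lambda>n. payoff_at X u (P (r n)) (ys (Suc (r k)))) \<longlonglongrightarrow> payoff_at X u p (ys (Suc (r k)))"
    using uniform_limit_payoff_at[OF P_lim] ys_in_Y by (rule tendsto_uniform_limitI)
  have "payoff X u (P (r n)) (Q (r n)) \<le> payoff_at X u (P (r n)) (ys (Suc (r k)))" if "Suc k \<le> n" for n
    using that r by (intro value_le_payoff_at ys_in_Ys) (simp add: strict_mono_less)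
  then show "\<exists>N. \<forall>n\<ge>N. payoff X u (P (r n)) (Q (r n)) \<le> payoff_at X u (P (r n)) (ys (Suc (r k)))"
    by blast
qed

lemma limit_value_le_payoff_at:
  assumes "y \<in> Y"
  shows "payoff X u p q \<le> payoff_at X u p y"
proof (rule field_le_epsilon)
  fix e :: real assume "e > 0"
  then have "\<forall>\<^sub>F k in sequentially. \<forall>z\<in>Y. dist (payoff_at X u (P (r k)) z) (payoff_at X u p z) < e / 2"
    by (intro uniform_limitD[OF uniform_limit_payoff_at[OF P_lim]]) auto
  then obtain k where k: "\<And>z. z \<in> Y \<Longrightarrow> \<bar>payoff_at X u (P (r k)) z - payoff_at X u p z\<bar> < e / 2"
    by (auto simp: eventually_sequentially dist_real_def)
  let ?y = "ys (Suc (r k))"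
  have "payoff X u p q \<le> payoff_at X u p ?y" by (rule limit_value_le_payoff_at_ys)
  also have "\<dots> \<le> payoff_at X u (P (r k)) ?y + e / 2" using k[OF ys_in_Y[of "r k"]] by linarith
  also have "\<dots> \<le> payoff_at X u (P (r k)) y + e / 2" using payoff_at_ys_le[OF assms] by simp
  also have "\<dots> \<le> payoff_at X u p y + e" using k[OF assms] by linarith
  finally show "payoff X u p q \<le> payoff_at X u p y + e" .
qed

lemma limit_is_mixed_NE: "mixed_NE X Y u p q"
  unfolding mixed_NE_iff_eps_NE_0
  by (rule eps_NE_if_pure_bounds[OF p q limit_pure1_payoff_le limit_value_le_payoff_at]) simp_all

end

lemma value_drops_if_not_stop:
  assumes "i < j" and "xs (Suc i) \<in> Xs i" and "\<not> ccdo_stop X Y u \<epsilon> P Q xs ys i"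
    and "payoff_at X u (P j) (ys (Suc i)) \<le> payoff_at X u (P i) (ys (Suc i)) + \<delta>"
  shows "payoff X u (P j) (Q j) < payoff X u (P i) (Q i) - \<epsilon> + \<delta>"
proof -
  have "payoff X u (P j) (Q j) \<le> payoff_at X u (P j) (ys (Suc i))"
    using assms(1) by (intro value_le_payoff_at ys_in_Ys)
  moreover have "payoff_at X u (P i) (ys (Suc i)) < payoff X u (P i) (Q i) - \<epsilon>"
    using assms(3) pure1_payoff_le_value[OF assms(2) xs_in_X[of i]]
    unfolding ccdo_stop_def payoff_pure2[OF ys_in_Y] by linarith
  ultimately show ?thesis using assms(4) by linarith
qed

lemma eventually_stops:
  assumes "\<epsilon> > 0"
  shows "\<exists>k. ccdo_stop X Y u \<epsilon> P Q xs ys k"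
proof (rule ccontr)
  assume no_stop: "\<nexists>k. ccdo_stop X Y u \<epsilon> P Q xs ys k"
  define v where "v k = payoff X u (P k) (Q k)" for k
  obtain K where K: "\<forall>k\<ge>K. xs (Suc k) \<in> Xs k" using eventually_xs_in_Xs by blast
  have "P k x \<in> {0..1}" if "x \<in> X" for k x
    using P_in_mixed1[of k] finite_X that member_le_sum[of x X "P k"] by (auto simp: mixed1_def)
  then obtain r p where r: "strict_mono r" and P_lim: "\<forall>x\<in>X. (\<lambda>k. P (r k) x) \<longlonglongrightarrow> p x"
    using convergent_subseq_finite_family[OF finite_X compact_Icc] by blast
  have "\<forall>\<^sub>F m in sequentially. \<forall>y\<in>Y. dist (payoff_at X u (P (r m)) y) (payoff_at X u p y) < \<epsilon> / 4"
    using assms P_lim by (intro uniform_limitD[OF uniform_limit_payoff_at]) auto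
  then obtain N where N: "\<And>m y. N \<le> m \<Longrightarrow> y \<in> Y \<Longrightarrow>
      \<bar>payoff_at X u (P (r m)) y - payoff_at X u p y\<bar> < \<epsilon> / 4"
    by (auto simp: eventually_sequentially dist_real_def)
  have step: "v (r (Suc m)) < v (r m) - \<epsilon> + \<epsilon> / 2" if "N + K \<le> m" for m
    unfolding v_def
  proof (rule value_drops_if_not_stop)
    show "r m < r (Suc m)" using r by (simp add: strict_mono_less)
    show "xs (Suc (r m)) \<in> Xs (r m)" using K seq_suble[OF r, of m] that by simp
    show "\<not> ccdo_stop X Y u \<epsilon> P Q xs ys (r m)" using no_stop by blast
    show "payoff_at X u (P (r (Suc m))) (ys (Suc (r m)))
        \<le> payoff_at X u (P (r m)) (ys (Suc (r m))) + \<epsilon> / 2"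
      using N[of m "ys (Suc (r m))"] N[of "Suc m" "ys (Suc (r m))"] ys_in_Y[of "r m"] that
      by linarith
  qed
  have drop: "v (r (N + K + Suc m)) \<le> v (r (N + K + m)) - \<epsilon> / 2" for m
    using step[OF le_add1[of "N + K" m]] by simp
  obtain B where B: "\<forall>p\<in>mixed1 X. \<forall>q\<in>mixed2 Y. B \<le> payoff X u p q"
    using payoff_lower_bound by blast
  obtain m where "v (r (N + K + m)) < B"
    using exists_less_if_steps_down[of "\<epsilon> / 2" "\<lambda>m. v (r (N + K + m))"] drop assms by auto
  moreover have "B \<le> v (r (N + K + m))" unfolding v_def using B P_in_mixed1 Q_in_mixed2 by blast
  ultimately show False by linarith
qed

end

context finite_continuous_game
begin

lemma eps_NE_at_stop:
  assumes "ccdo_step X Y u Xs Ys P Q xs ys K" and "ccdo_stop X Y u \<epsilon> P Q xs ys K"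
  shows "eps_NE X Y u \<epsilon> (P K) (Q K)"
proof -
  have NE: "subgame_NE X Y u (Xs K) (Ys K) (P K) (Q K)"
    and BR1: "xs (Suc K) \<in> BR1 X u (Q K)" and BR2: "ys (Suc K) \<in> BR2 X Y u (P K)"
    using assms(1) unfolding ccdo_step_def by auto
  show ?thesis
  proof (rule eps_NE_if_pure_bounds)
    show "P K \<in> mixed1 X" "Q K \<in> mixed2 Y" using NE unfolding subgame_NE_def by auto
    show "payoff X u (pure1 x) (Q K) \<le> payoff X u (pure1 (xs (Suc K))) (Q K)" if "x \<in> X" for x
      using BR1 that unfolding BR1_def by auto
    show "payoff_at X u (P K) (ys (Suc K)) \<le> payoff_at X u (P K) y" if "y \<in> Y" for y
      using BR2 that unfolding BR2_def by (auto simp: payoff_pure2)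
    show "payoff X u (pure1 (xs (Suc K))) (Q K) - payoff_at X u (P K) (ys (Suc K)) \<le> \<epsilon>"
      using assms(2) BR2 unfolding ccdo_stop_def BR2_def by (auto simp: payoff_pure2)
  qed
qed

lemma ccdo_terminates_at_eps_NE:
  assumes "\<epsilon> > 0" and "ccdo_init X Y Xs Ys"
    and "\<And>k. \<forall>j<k. \<not> ccdo_stop X Y u \<epsilon> P Q xs ys j \<Longrightarrow> ccdo_step X Y u Xs Ys P Q xs ys k"
  shows "\<exists>K. ccdo_stop X Y u \<epsilon> P Q xs ys K \<and> (\<forall>j<K. \<not> ccdo_stop X Y u \<epsilon> P Q xs ys j) \<and>
    eps_NE X Y u \<epsilon> (P K) (Q K)"
proof -
  have "\<exists>k. ccdo_stop X Y u \<epsilon> P Q xs ys k"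
  proof (rule ccontr)
    assume no_stop: "\<nexists>k. ccdo_stop X Y u \<epsilon> P Q xs ys k"
    then interpret ccdo_run X Y u Xs Ys P Q xs ys
      using assms(2,3) by unfold_locales auto
    show False using eventually_stops[OF assms(1)] no_stop by blast
  qed
  define K where "K = (LEAST k. ccdo_stop X Y u \<epsilon> P Q xs ys k)"
  have stop: "ccdo_stop X Y u \<epsilon> P Q xs ys K"
    unfolding K_def using \<open>\<exists>k. _\<close> by (rule LeastI_ex)
  have before: "\<forall>j<K. \<not> ccdo_stop X Y u \<epsilon> P Q xs ys j"
    unfolding K_def using not_less_Least by blast
  then have "eps_NE X Y u \<epsilon> (P K) (Q K)" using assms(3) stop by (intro eps_NE_at_stop)
  then show ?thesis using stop before by blast
qed

end

theorem theorem2: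
  fixes X :: "'a set" and Y :: "'b::metric_space set" and u :: "'a \<Rightarrow> 'b \<Rightarrow> real"
    and \<epsilon> :: real
  assumes "finite X" and "X \<noteq> {}" and "compact Y" and "Y \<noteq> {}"
    and "\<forall>x\<in>X. continuous_on Y (u x)" and "\<epsilon> \<ge> 0"
  shows
   "(\<epsilon> = 0 \<longrightarrow>
      (\<forall>Xs Ys P Q xs ys.
         ccdo_init X Y Xs Ys \<and>
         (\<forall>k. ccdo_step X Y u Xs Ys P Q xs ys k \<and> \<not> ccdo_stop X Y u \<epsilon> P Q xs ys k) \<longrightarrow>
         (\<forall>r p q. strict_mono r \<and> p \<in> mixed1 X \<and> q \<in> mixed2 Y \<and>
              (\<forall>x\<in>X. (\<lambda>k. P (r k) x) \<longlonglongrightarrow> p x) \<and> weak_conv Y (\<lambda>k. Q (r k)) q \<longrightarrow>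
              mixed_NE X Y u p q)))
    \<and>
    (\<epsilon> > 0 \<longrightarrow>
      (\<forall>Xs Ys P Q xs ys.
         ccdo_init X Y Xs Ys \<and>
         (\<forall>k. (\<forall>j<k. \<not> ccdo_stop X Y u \<epsilon> P Q xs ys j) \<longrightarrow> ccdo_step X Y u Xs Ys P Q xs ys k) \<longrightarrow>
         (\<exists>K. ccdo_stop X Y u \<epsilon> P Q xs ys K \<and> (\<forall>j<K. \<not> ccdo_stop X Y u \<epsilon> P Q xs ys j) \<and>
              eps_NE X Y u \<epsilon> (P K) (Q K))))"
proof -
  interpret finite_continuous_game X Y u using assms by unfold_locales auto
  show ?thesis
  proof (intro conjI impI allI)
    fix Xs Ys P Q xs ys r p q
    assume run: "ccdo_init X Y Xs Ys \<and>
        (\<forall>k. ccdo_step X Y u Xs Ys P Q xs ys k \<and> \<not> ccdo_stop X Y u \<epsilon> P Q xs ys k)"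
      and lim: "strict_mono r \<and> p \<in> mixed1 X \<and> q \<in> mixed2 Y \<and>
        (\<forall>x\<in>X. (\<lambda>k. P (r k) x) \<longlonglongrightarrow> p x) \<and> weak_conv Y (\<lambda>k. Q (r k)) q"
    interpret ccdo_run X Y u Xs Ys P Q xs ys using run by unfold_locales auto
    show "mixed_NE X Y u p q" using lim by (intro limit_is_mixed_NE) auto
  next
    fix Xs Ys P Q xs ys
    assume "\<epsilon> > 0" and "ccdo_init X Y Xs Ys \<and>
        (\<forall>k. (\<forall>j<k. \<not> ccdo_stop X Y u \<epsilon> P Q xs ys j) \<longrightarrow> ccdo_step X Y u Xs Ys P Q xs ys k)"
    then show "\<exists>K. ccdo_stop X Y u \<epsilon> P Q xs ys K \<and> (\<forall>j<K. \<not> ccdo_stop X Y u \<epsilon> P Q xs ys j) \<and>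
        eps_NE X Y u \<epsilon> (P K) (Q K)"
      by (intro ccdo_terminates_at_eps_NE) auto
  qed
qed

end
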